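(* Let $a,b\in\mathbb{M}_2$ with $0\le a,b\le 1$ and $a,b\notin\{0,1\}$, such that $a$ is absolutely compatible with $b$ and $ab=ba$. Then: (a) If $a$ is strict, then there exist $\alpha,\beta\in(0,1)$ and a minimal (rank one) projection $p\in\mathbb{M}_2$ such that $b=p$ and $a=\alpha p+\beta(1-p)$. (b) If $a$ is not strict, then one of the following holds: (b.1) if $e(a)=0$, there exist $\alpha,\beta\in[0,1]$ with $\alpha+\beta>0$ and a minimal projection $p\in\mathbb{M}_2$ such that $a=p$ and $b=\alpha p+\beta(1-p)$; (b.2) if $s(a)\neq0$ and $e(a)\ne0$, there exist $\alpha,\beta\in[0,1]$ and a minimal projection $p\in\mathbb{M}_2$ such that either $a=p+\alpha(1-p)$ and $b=\beta p+(1-p)$ with $\alpha\ne0$, or $a=p+\alpha(1-p)$ and $b=\beta p$ with $\alpha,\beta\ne0$; (b.3) if $n(a)\ne0$ and $e(a)\neq0$, there exist $\alpha,\beta\in[0,1]$ and a minimal projection $p\in\mathbb{M}_2$ such that either $a=\alpha p$ and $b=p+\beta(1-p)$ with $\alpha\ne0$, or $a=\alpha p$ and $b=\beta(1-p)$ with $\alpha,\beta\ne0$.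
   Context: $\mathbb{M}_2$ is the algebra of $2\times2$ complex matrices. For $x$ in it, $|x|=(x^*x)^{1/2}$. Elements $0\le a,b\le 1$ are absolutely compatible if $|a-b|+|1-a-b|=1$. For positive $x$, $r(x)$ is the range projection. For $0\le a\le1$: $s(a)=1-r(1-a)$ (support projection), $e(a)=a-s(a)$, $n(a)=1-r(a)$; a non-zero $0\le a\le 1$ is strict if $s(a)=0=n(a)$. *)

theory Defs
  imports "HOL-Analysis.Analysis"
begin

type_synonym M2 = "complex^2^2"

definition madj :: "M2 \<Rightarrow> M2" where
  "madj x = (\<chi> i j. cnj (x $ j $ i))"

definition qform :: "M2 \<Rightarrow> complex^2 \<Rightarrow> complex" where
  "qform x v = (\<Sum>i\<in>UNIV. cnj (v $ i) * ((x *v v) $ i))"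

definition mpos :: "M2 \<Rightarrow> bool" where
  "mpos x \<longleftrightarrow> madj x = x \<and> (\<forall>v. qform x v \<in> \<real> \<and> 0 \<le> Re (qform x v))"

definition mle :: "M2 \<Rightarrow> M2 \<Rightarrow> bool" where
  "mle x y \<longleftrightarrow> mpos (y - x)"

definition mproj :: "M2 \<Rightarrow> bool" where
  "mproj p \<longleftrightarrow> p ** p = p \<and> madj p = p"

definition minproj :: "M2 \<Rightarrow> bool" where
  "minproj p \<longleftrightarrow> mproj p \<and> p \<noteq> 0 \<and> (\<forall>q. mproj q \<and> mle q p \<longrightarrow> q = 0 \<or> q = p)"

definition mabs :: "M2 \<Rightarrow> M2" where
  "mabs x = (THE r. mpos r \<and> r ** r = madj x ** x)"

definition abs_compatible :: "M2 \<Rightarrow> M2 \<Rightarrow> bool" where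
  "abs_compatible a b \<longleftrightarrow> mabs (a - b) + mabs (mat 1 - a - b) = mat 1"

definition rproj :: "M2 \<Rightarrow> M2" where
  "rproj x = (THE p. mproj p \<and> range ((*v) p) = range ((*v) x))"

definition sproj :: "M2 \<Rightarrow> M2" where
  "sproj a = mat 1 - rproj (mat 1 - a)"

definition eproj :: "M2 \<Rightarrow> M2" where
  "eproj a = a - sproj a"

definition nproj :: "M2 \<Rightarrow> M2" where
  "nproj a = mat 1 - rproj a"

definition strict :: "M2 \<Rightarrow> bool" where
  "strict a \<longleftrightarrow> a \<noteq> 0 \<and> mle 0 a \<and> mle a (mat 1) \<and> sproj a = 0 \<and> nproj a = 0"

end

theory Submission
  imports Defs
begin

text \<open>
  Commuting self-adjoint 2x2 matrices are simultaneously diagonalisable: there is a rank-one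
  projection \<open>p\<close> with \<open>a = \<alpha> p + \<beta> (1 - p)\<close> and \<open>b = \<gamma> p + \<delta> (1 - p)\<close>.
  In this basis the absolute value, the range projection and the order are computed weight by
  weight, so absolute compatibility becomes \<open>|\<alpha> - \<gamma>| + |1 - \<alpha> - \<gamma>| = 1\<close> together with
  the same equation for \<open>\<beta>, \<delta>\<close>; for weights in \<open>[0, 1]\<close> this says that in each
  coordinate one of the two weights is \<open>0\<close> or \<open>1\<close>. Strictness and \<open>s(a)\<close>, \<open>n(a)\<close>,
  \<open>e(a)\<close> are read off from \<open>(\<alpha>, \<beta>)\<close> as well, and each case of the statement becomes a
  short case analysis on the four weights, up to exchanging \<open>p\<close> and \<open>1 - p\<close>.
\<close>

lemma M2_eq_iff:
  "(x::M2) = y \<longleftrightarrow> x$1$1 = y$1$1 \<and> x$1$2 = y$1$2 \<and> x$2$1 = y$2$1 \<and> x$2$2 = y$2$2"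
  by (auto simp: vec_eq_iff forall_2)

lemma M2_eqI:
  "x$1$1 = y$1$1 \<Longrightarrow> x$1$2 = y$1$2 \<Longrightarrow> x$2$1 = y$2$1 \<Longrightarrow> x$2$2 = y$2$2 \<Longrightarrow> (x::M2) = y"
  by (simp add: M2_eq_iff)

lemma mmult_entry [simp]: "((x::M2) ** y)$i$j = x$i$1 * y$1$j + x$i$2 * y$2$j"
  by (simp add: matrix_matrix_mult_def sum_2)

lemma mvmult_entry [simp]: "((x::M2) *v v)$i = x$i$1 * v$1 + x$i$2 * v$2"
  by (simp add: matrix_vector_mult_def sum_2)

lemma madj_entry [simp]: "madj x $i$j = cnj (x$j$i)"
  by (simp add: madj_def)

lemma mat1_entry [simp]:
  "(mat 1 :: M2)$1$1 = 1" "(mat 1 :: M2)$2$2 = 1" "(mat 1 :: M2)$1$2 = 0" "(mat 1 :: M2)$2$1 = 0"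
  by (simp_all add: mat_def)

lemma trace_M2: "trace (x::M2) = x$1$1 + x$2$2"
  by (simp add: trace_def sum_2)

lemma qform_M2: "qform x v = cnj (v$1) * (x *v v)$1 + cnj (v$2) * (x *v v)$2"
  by (simp add: qform_def sum_2)

lemma matrix_add_rdistrib: "((A::'a::semiring_1^'n^'m) + B) ** C = A ** C + B ** C"
  by (vector matrix_matrix_mult_def sum.distrib[symmetric] field_simps)

lemma matrix_diff_rdistrib: "((A::'a::ring_1^'n^'m) - B) ** C = A ** C - B ** C"
  by (vector matrix_matrix_mult_def sum_subtractf[symmetric] algebra_simps)

lemma matrix_diff_ldistrib: "(C::'a::ring_1^'n^'m) ** (A - B) = C ** A - C ** B"
  by (vector matrix_matrix_mult_def sum_subtractf[symmetric] algebra_simps)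

lemmas matrix_distrib =
  matrix_add_ldistrib matrix_add_rdistrib matrix_diff_ldistrib matrix_diff_rdistrib

lemma madj_madj [simp]: "madj (madj x) = x"
  by (simp add: M2_eq_iff)

lemma madj_mmult: "madj (x ** y) = madj y ** madj x"
  by (simp add: M2_eq_iff algebra_simps)

lemma madj_add [simp]: "madj (x + y) = madj x + madj y"
  and madj_diff [simp]: "madj (x - y) = madj x - madj y"
  and madj_scaleR [simp]: "madj (c *\<^sub>R x) = c *\<^sub>R madj x"
  and madj_mat1 [simp]: "madj (mat 1) = mat 1"
  by (simp_all add: M2_eq_iff)

lemma hermitian_cnj_entries:
  assumes "madj x = x"
  shows "cnj (x$1$1) = x$1$1" "cnj (x$2$2) = x$2$2" "cnj (x$2$1) = x$1$2" "cnj (x$1$2) = x$2$1"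
  using assms by (simp_all add: M2_eq_iff)

lemma trace_hermitian_mmult_real:
  assumes "madj x = x" "madj y = y"
  shows "trace (x ** y) = of_real (Re (trace (x ** y)))"
proof -
  have "cnj (trace (x ** y)) = trace (x ** y)"
    by (simp add: trace_M2 hermitian_cnj_entries[OF assms(1)] hermitian_cnj_entries[OF assms(2)]
        algebra_simps)
  then show ?thesis
    by (simp add: complex_eq_iff)
qed

text \<open>For \<open>y = 1\<close> this is the Cayley-Hamilton theorem for 2x2 matrices.\<close>
lemma mmult_sandwich_entry:
  "((x::M2) ** y ** x)$i$j = trace (x ** y) * x$i$j - det x * (trace y * (mat 1 :: M2)$i$j - y$i$j)"
proof -
  have "i = 1 \<or> i = 2" "j = 1 \<or> j = 2"
    using exhaust_2 by auto
  then show ?thesis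
    by (elim disjE) (simp_all add: trace_M2 det_2 algebra_simps)
qed

lemma cnj_mult_self: "cnj z * z = of_real ((cmod z)\<^sup>2)"
  using complex_norm_square[of z] by (simp only: mult.commute)

lemma qform_sandwich: "qform (madj c ** x ** c) v = qform x (c *v v)"
  by (simp add: qform_M2 algebra_simps)

lemma mpos_sandwich:
  assumes "mpos x"
  shows "mpos (madj c ** x ** c)"
  using assms by (simp add: mpos_def madj_mmult matrix_mul_assoc qform_sandwich)

lemma mpos_mat1: "mpos (mat 1)"
proof -
  have "qform (mat 1) v = of_real ((cmod (v$1))\<^sup>2 + (cmod (v$2))\<^sup>2)" for v
  proof -
    have "qform (mat 1) v = cnj (v$1) * v$1 + cnj (v$2) * v$2"
      by (simp add: qform_M2)
    then show ?thesis
      by (simp only: cnj_mult_self of_real_add)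
  qed
  then show ?thesis
    by (simp add: mpos_def)
qed

lemma mpos_madj_mmult: "mpos (madj c ** c)"
  using mpos_sandwich[OF mpos_mat1, of c] by simp

lemma mpos_trace_nonneg:
  assumes "mpos x"
  shows "0 \<le> Re (trace x)"
proof -
  have "qform x (vector [1, 0]) = x$1$1" "qform x (vector [0, 1]) = x$2$2"
    by (simp_all add: qform_M2)
  then have "0 \<le> Re (x$1$1)" "0 \<le> Re (x$2$2)"
    using assms unfolding mpos_def by metis+
  then show ?thesis
    by (simp add: trace_M2)
qed

lemma madj_mmult_self_eq_0:
  assumes "madj x ** x = 0"
  shows "x = 0"
proof -
  have "of_real ((cmod (x$1$1))\<^sup>2 + (cmod (x$2$1))\<^sup>2) = (madj x ** x)$1$1"
    and "of_real ((cmod (x$1$2))\<^sup>2 + (cmod (x$2$2))\<^sup>2) = (madj x ** x)$2$2"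
    by (simp_all only: mmult_entry madj_entry cnj_mult_self of_real_add)
  then have "(cmod (x$1$1))\<^sup>2 + (cmod (x$2$1))\<^sup>2 = 0" "(cmod (x$1$2))\<^sup>2 + (cmod (x$2$2))\<^sup>2 = 0"
    using assms by (simp_all only: zero_index of_real_eq_0_iff)
  then show ?thesis
    by (simp add: M2_eq_iff add_nonneg_eq_0_iff)
qed

lemma mproj_compl:
  assumes "mproj p"
  shows "mproj (mat 1 - p)"
  using assms by (simp add: mproj_def matrix_distrib)

definition rank_one_proj :: "M2 \<Rightarrow> bool" where
  "rank_one_proj p \<longleftrightarrow> mproj p \<and> p \<noteq> 0 \<and> p \<noteq> mat 1"

lemma rank_one_proj_compl:
  assumes "rank_one_proj p"
  shows "rank_one_proj (mat 1 - p)"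
  using assms mproj_compl by (auto simp: rank_one_proj_def)

lemma rank_one_proj_iff: "rank_one_proj p \<longleftrightarrow> madj p = p \<and> trace p = 1 \<and> det p = 0"
proof
  assume "rank_one_proj p"
  then have idem: "p ** p = p" and herm: "madj p = p" and "p \<noteq> 0" "p \<noteq> mat 1"
    by (auto simp: rank_one_proj_def mproj_def)
  define u where "u = p$1$1"
  define v where "v = p$2$2"
  define w where "w = p$1$2"
  have p21: "p$2$1 = cnj w"
    using hermitian_cnj_entries[OF herm] by (simp add: w_def)
  have e11: "u * u + w * cnj w = u" and e12: "u * w + w * v = w" and e22: "cnj w * w + v * v = v"
    using idem by (simp_all add: M2_eq_iff p21 flip: u_def v_def w_def)
  have "u + v = 1"
  proof (cases "w = 0")
    case True
    then have "u * u = u" "v * v = v"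
      using e11 e22 by simp_all
    then have "u = 0 \<or> u = 1" "v = 0 \<or> v = 1"
      by (metis mult_cancel_right2 mult_zero_left)+
    moreover have "\<not> (u = 0 \<and> v = 0)" "\<not> (u = 1 \<and> v = 1)"
      using \<open>p \<noteq> 0\<close> \<open>p \<noteq> mat 1\<close> True p21 by (auto simp: M2_eq_iff u_def v_def w_def)
    ultimately show ?thesis
      by auto
  next
    case False
    have "w * (u + v - 1) = 0"
      using e12 by (simp add: algebra_simps)
    with False show ?thesis
      by simp
  qed
  moreover have "det p = u * (u + v - 1)"
    using e11 by (simp add: det_2 p21 algebra_simps flip: u_def v_def w_def)
  ultimately show "madj p = p \<and> trace p = 1 \<and> det p = 0"
    by (simp add: herm trace_M2 u_def v_def)
next
  assume p: "madj p = p \<and> trace p = 1 \<and> det p = 0"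
  then have "p ** p = p"
    using mmult_sandwich_entry[of p "mat 1"] by (simp add: M2_eq_iff)
  moreover have "p \<noteq> 0" "p \<noteq> mat 1"
    using p by (auto simp: trace_M2)
  ultimately show "rank_one_proj p"
    using p by (simp add: rank_one_proj_def mproj_def)
qed

lemma rank_one_proj_exists: "\<exists>p. rank_one_proj p"
proof
  show "rank_one_proj (\<chi> i j. of_bool (i = 1 \<and> j = 1))"
    by (simp add: rank_one_proj_iff M2_eq_iff trace_M2 det_2)
qed

lemma rank_one_sandwich:
  assumes "rank_one_proj p" "madj x = x"
  shows "p ** x ** p = Re (trace (p ** x)) *\<^sub>R p"
proof -
  have "madj p = p" "det p = 0"
    using assms(1) by (simp_all add: rank_one_proj_iff)
  then have "(p ** x ** p)$i$j = (Re (trace (p ** x)) *\<^sub>R p)$i$j" for i j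
    using mmult_sandwich_entry[of p x i j] trace_hermitian_mmult_real[of p x] assms(2)
    by (simp del: mmult_entry) (simp add: scaleR_conv_of_real)
  then show ?thesis
    by (simp add: M2_eq_iff)
qed

text \<open>The matrix \<open>diag(s, t)\<close> in an orthonormal basis in which \<open>p = diag(1, 0)\<close>.\<close>
definition pdiag :: "M2 \<Rightarrow> real \<Rightarrow> real \<Rightarrow> M2" where
  "pdiag p s t = s *\<^sub>R p + t *\<^sub>R (mat 1 - p)"

lemma pdiag_add: "pdiag p s t + pdiag p s' t' = pdiag p (s + s') (t + t')"
  and pdiag_diff: "pdiag p s t - pdiag p s' t' = pdiag p (s - s') (t - t')"
  and scaleR_pdiag: "c *\<^sub>R pdiag p s t = pdiag p (c * s) (c * t)"
  and mat1_diff_pdiag: "mat 1 - pdiag p s t = pdiag p (1 - s) (1 - t)"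
  and pdiag_const: "pdiag p c c = c *\<^sub>R mat 1"
  and pdiag_1_0: "pdiag p 1 0 = p"
  and pdiag_compl: "pdiag (mat 1 - p) s t = pdiag p t s"
  by (simp_all add: pdiag_def algebra_simps)

lemma pdiag_mmult:
  assumes "mproj p"
  shows "pdiag p s t ** pdiag p s' t' = pdiag p (s * s') (t * t')"
proof -
  have "p ** p = p"
    using assms by (simp add: mproj_def)
  then show ?thesis
    by (simp add: pdiag_def matrix_distrib matrix_scalar_ac algebra_simps flip: scalar_matrix_assoc)
qed

lemma madj_pdiag:
  assumes "mproj p"
  shows "madj (pdiag p s t) = pdiag p s t"
  using assms by (simp add: pdiag_def mproj_def)

lemma trace_scaleR: "trace (c *\<^sub>R (x::'a::real_algebra_1^'n^'n)) = c *\<^sub>R trace x"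
  by (simp add: trace_def scaleR_sum_right)

lemma trace_pdiag:
  assumes "rank_one_proj p"
  shows "trace (pdiag p s t) = of_real (s + t)"
  using assms
  by (simp add: pdiag_def trace_add trace_sub trace_scaleR trace_I rank_one_proj_iff
      scaleR_conv_of_real[where 'a=complex] algebra_simps)

lemma pdiag_mmult_proj:
  assumes "mproj p"
  shows "p ** pdiag p s t = pdiag p s 0" "(mat 1 - p) ** pdiag p s t = pdiag p 0 t"
  using pdiag_mmult[OF assms, of 1 0 s t] pdiag_mmult[OF assms, of 0 1 s t]
  by (simp_all add: pdiag_1_0) (simp add: pdiag_def)

lemma pdiag_eq_iff:
  assumes "rank_one_proj p"
  shows "pdiag p s t = pdiag p s' t' \<longleftrightarrow> s = s' \<and> t = t'"
proof
  assume eq: "pdiag p s t = pdiag p s' t'"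
  have "mproj p"
    using assms by (simp add: rank_one_proj_def)
  have "trace (p ** pdiag p s t) = trace (p ** pdiag p s' t')"
    "trace ((mat 1 - p) ** pdiag p s t) = trace ((mat 1 - p) ** pdiag p s' t')"
    using eq by simp_all
  then show "s = s' \<and> t = t'"
    by (simp add: pdiag_mmult_proj[OF \<open>mproj p\<close>] trace_pdiag[OF assms])
qed simp

lemma commuting_hermitian_eq_pdiag:
  assumes "rank_one_proj p" "madj y = y" "y ** p = p ** y"
  shows "\<exists>s t. y = pdiag p s t"
proof -
  have "mproj p" "p ** p = p"
    using assms(1) by (simp_all add: rank_one_proj_def mproj_def)
  have "p ** y ** p = p ** y"
    by (metis assms(3) \<open>p ** p = p\<close> matrix_mul_assoc)
  moreover have "(mat 1 - p) ** y ** (mat 1 - p) = (mat 1 - p) ** y"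
    using \<open>p ** y ** p = p ** y\<close> assms(3) by (simp add: matrix_distrib matrix_mul_assoc)
  moreover have "y = p ** y + (mat 1 - p) ** y"
    by (simp add: matrix_distrib)
  ultimately have "y = p ** y ** p + (mat 1 - p) ** y ** (mat 1 - p)"
    by simp
  then show ?thesis
    unfolding rank_one_sandwich[OF assms(1,2)]
      rank_one_sandwich[OF rank_one_proj_compl[OF assms(1)] assms(2)]
    by (auto simp: pdiag_def)
qed

lemma mpos_pdiag_iff:
  assumes "rank_one_proj p"
  shows "mpos (pdiag p s t) \<longleftrightarrow> 0 \<le> s \<and> 0 \<le> t"
proof
  have "mproj p"
    using assms by (simp add: rank_one_proj_def)
  have first_weight_nonneg: "0 \<le> s" if "rank_one_proj p" "mpos (pdiag p s t)" for p s t
  proof -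
    have "mproj p" "madj p = p"
      using that(1) by (simp_all add: rank_one_proj_def mproj_def)
    then have "madj p ** pdiag p s t ** p = pdiag p s 0"
      using pdiag_mmult[of p s 0 1 0] by (simp add: pdiag_mmult_proj pdiag_1_0)
    then have "mpos (pdiag p s 0)"
      using mpos_sandwich[OF that(2), of p] by simp
    then have "0 \<le> Re (trace (pdiag p s 0))"
      by (rule mpos_trace_nonneg)
    then show ?thesis
      by (simp add: trace_pdiag[OF that(1)])
  qed
  show "mpos (pdiag p s t) \<Longrightarrow> 0 \<le> s \<and> 0 \<le> t"
    using first_weight_nonneg[OF assms] first_weight_nonneg[OF rank_one_proj_compl[OF assms]]
    by (simp add: pdiag_compl)
  show "0 \<le> s \<and> 0 \<le> t \<Longrightarrow> mpos (pdiag p s t)"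
    using mpos_madj_mmult[of "pdiag p (sqrt s) (sqrt t)"]
    by (simp add: madj_pdiag[OF \<open>mproj p\<close>] pdiag_mmult[OF \<open>mproj p\<close>])
qed

text \<open>The spectral projection of \<open>h\<close> for its larger eigenvalue \<open>(x + y)/2 + r\<close>, where
  \<open>x, y\<close> are the diagonal entries of \<open>h\<close>.\<close>
lemma rank_one_proj_spectral:
  fixes h :: M2
  defines "x \<equiv> Re (h$1$1)" and "y \<equiv> Re (h$2$2)"
  assumes "madj h = h" "r > 0" "r\<^sup>2 = ((x - y) / 2)\<^sup>2 + (cmod (h$1$2))\<^sup>2"
  shows "rank_one_proj ((1 / (2 * r)) *\<^sub>R h + (1 / 2 - (x + y) / (4 * r)) *\<^sub>R mat 1)"
    (is "rank_one_proj ?p")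
proof -
  define c where "c = 1 / (2 * r)"
  define e where "e = (x - y) / 2"
  define w where "w = h$1$2"
  have h: "h$1$1 = of_real x" "h$2$2 = of_real y" "h$2$1 = cnj w"
    using hermitian_cnj_entries[OF assms(3)] by (simp_all add: x_def y_def w_def complex_eq_iff)
  have "?p$1$1 = of_real (c * x + (1 / 2 - (x + y) / (4 * r)))"
    "?p$2$2 = of_real (c * y + (1 / 2 - (x + y) / (4 * r)))"
    by (simp_all add: c_def h scaleR_conv_of_real[where 'a=complex])
  moreover have "c * x + (1 / 2 - (x + y) / (4 * r)) = (r + e) / (2 * r)"
    "c * y + (1 / 2 - (x + y) / (4 * r)) = (r - e) / (2 * r)"
    using \<open>r > 0\<close> by (simp_all add: c_def e_def field_simps)
  ultimately have p11: "?p$1$1 = of_real ((r + e) / (2 * r))"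
    and p22: "?p$2$2 = of_real ((r - e) / (2 * r))"
    by simp_all
  have "trace ?p = of_real ((r + e) / (2 * r) + (r - e) / (2 * r))"
    by (simp only: trace_M2 p11 p22 of_real_add)
  also have "\<dots> = 1"
    using \<open>r > 0\<close> by (simp add: field_simps)
  finally have "trace ?p = 1" .
  moreover have "det ?p = 0"
  proof -
    have "?p$1$2 = of_real c * w" "?p$2$1 = of_real c * cnj w"
      by (simp_all add: c_def h w_def scaleR_conv_of_real[where 'a=complex])
    then have "det ?p = ?p$1$1 * ?p$2$2 - of_real c * of_real c * (w * cnj w)"
      by (simp add: det_2 mult_ac)
    also have "w * cnj w = of_real (r\<^sup>2 - e\<^sup>2)"
      using complex_norm_square[of w] assms(5) by (simp add: e_def w_def)
    also have "?p$1$1 * ?p$2$2 - of_real c * of_real c * of_real (r\<^sup>2 - e\<^sup>2) =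
        of_real ((r + e) / (2 * r) * ((r - e) / (2 * r)) - c * c * (r\<^sup>2 - e\<^sup>2))"
      unfolding p11 p22 by simp
    also have "\<dots> = 0"
      using \<open>r > 0\<close> by (simp add: c_def field_simps power2_eq_square)
    finally show ?thesis .
  qed
  moreover have "madj ?p = ?p"
    using assms(3) by simp
  ultimately show ?thesis
    by (simp add: rank_one_proj_iff)
qed

lemma hermitian_scalar_or_rank_one_affine:
  assumes "madj h = h"
  shows "(\<exists>c. h = c *\<^sub>R mat 1) \<or> (\<exists>p c d. rank_one_proj p \<and> p = c *\<^sub>R h + d *\<^sub>R mat 1)"
proof -
  define x where "x = Re (h$1$1)"
  define y where "y = Re (h$2$2)"
  define r where "r = sqrt (((x - y) / 2)\<^sup>2 + (cmod (h$1$2))\<^sup>2)"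
  have r_sq: "r\<^sup>2 = ((x - y) / 2)\<^sup>2 + (cmod (h$1$2))\<^sup>2"
    by (simp add: r_def)
  show ?thesis
  proof (cases "r = 0")
    case True
    then have "x = y" "h$1$2 = 0"
      using r_sq by (simp_all add: add_nonneg_eq_0_iff)
    then have "h = x *\<^sub>R mat 1"
      using hermitian_cnj_entries[OF assms]
      by (intro M2_eqI) (simp_all add: x_def y_def complex_eq_iff)
    then show ?thesis
      by blast
  next
    case False
    moreover have "r \<ge> 0"
      by (simp add: r_def)
    ultimately have "r > 0"
      by simp
    then show ?thesis
      using rank_one_proj_spectral[of h r] assms r_sq unfolding x_def y_def by blast
  qed
qed

lemma commuting_hermitian_simultaneous_pdiag:
  assumes "madj a = a" "madj b = b" "a ** b = b ** a"
  shows "\<exists>p s t s' t'. rank_one_proj p \<and> a = pdiag p s t \<and> b = pdiag p s' t'"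
proof -
  have pdiag_of_affine: "\<exists>s t. y = pdiag p s t"
    if "rank_one_proj p" "p = c *\<^sub>R x + d *\<^sub>R mat 1" "madj y = y" "y ** x = x ** y" for p c d x y
  proof -
    have "y ** p = p ** y"
      using that(2,4) by (simp add: matrix_distrib matrix_scalar_ac flip: scalar_matrix_assoc)
    then show ?thesis
      using commuting_hermitian_eq_pdiag[OF that(1,3)] by blast
  qed
  consider (a_scalar) c where "a = c *\<^sub>R mat 1"
    | (a_affine) p c d where "rank_one_proj p" "p = c *\<^sub>R a + d *\<^sub>R mat 1"
    using hermitian_scalar_or_rank_one_affine[OF assms(1)] by blast
  then show ?thesis
  proof cases
    case a_scalar
    consider (b_scalar) c' where "b = c' *\<^sub>R mat 1"
      | (b_affine) p c d where "rank_one_proj p" "p = c *\<^sub>R b + d *\<^sub>R mat 1"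
      using hermitian_scalar_or_rank_one_affine[OF assms(2)] by blast
    then show ?thesis
    proof cases
      case b_scalar
      then show ?thesis
        using a_scalar rank_one_proj_exists by (metis pdiag_const)
    next
      case b_affine
      then show ?thesis
        using pdiag_of_affine[OF b_affine assms(2)] a_scalar by (metis pdiag_const)
    qed
  next
    case a_affine
    then show ?thesis
      using pdiag_of_affine[OF a_affine assms(1)] pdiag_of_affine[OF a_affine assms(2) assms(3)[symmetric]] by blast
  qed
qed

lemma hermitian_eq_pdiag:
  assumes "madj h = h"
  shows "\<exists>p s t. rank_one_proj p \<and> h = pdiag p s t"
  using commuting_hermitian_simultaneous_pdiag[OF assms assms] by blast

lemma mproj_eq_if_same_range:
  assumes "mproj p" "mproj p'" "range ((*v) p) = range ((*v) p')"
  shows "p = p'"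
proof -
  have absorb: "p ** p' = p'"
    if proj: "mproj p" and sub: "range ((*v) p') \<subseteq> range ((*v) p)" for p p'
  proof -
    have "(p ** p') *v v = p' *v v" for v
    proof -
      obtain u where u: "p' *v v = p *v u"
        using sub by auto
      have "(p ** p') *v v = (p ** p) *v u"
        by (simp add: u flip: matrix_vector_mul_assoc)
      then show ?thesis
        using proj u by (simp add: mproj_def)
    qed
    then show ?thesis
      by (simp add: matrix_eq)
  qed
  have "p = madj (p' ** p)"
    using absorb[of p' p] assms by (simp add: mproj_def)
  also have "\<dots> = p ** p'"
    using assms by (simp add: madj_mmult mproj_def)
  also have "\<dots> = p'"
    using absorb[of p p'] assms by simp
  finally show ?thesis .
qed

lemma range_mvmult_eqI:
  fixes x p y :: M2
  assumes "x = p ** x" "p = x ** y"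
  shows "range ((*v) x) = range ((*v) p)"
proof -
  have sub: "range ((*v) (a ** b)) \<subseteq> range ((*v) a)" for a b :: M2
    by (auto simp flip: matrix_vector_mul_assoc)
  show ?thesis
    using sub[of p x] sub[of x y] assms by (simp add: subset_antisym)
qed

lemma rproj_pdiag:
  assumes "mproj p"
  shows "rproj (pdiag p s t) = pdiag p (of_bool (s \<noteq> 0)) (of_bool (t \<noteq> 0))"
  unfolding rproj_def
proof (rule the_equality)
  let ?r = "pdiag p (of_bool (s \<noteq> 0)) (of_bool (t \<noteq> 0))"
  have "mproj ?r"
    by (simp add: mproj_def pdiag_mmult[OF assms] madj_pdiag[OF assms])
  moreover have "range ((*v) ?r) = range ((*v) (pdiag p s t))"
    by (rule range_mvmult_eqI[symmetric, where y = "pdiag p (inverse s) (inverse t)"])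
      (simp_all add: pdiag_mmult[OF assms])
  ultimately show "mproj ?r \<and> range ((*v) ?r) = range ((*v) (pdiag p s t))"
    by simp
  then show "p' = ?r" if "mproj p' \<and> range ((*v) p') = range ((*v) (pdiag p s t))" for p'
    using that mproj_eq_if_same_range by auto
qed

lemma pdiag_affine_of_square:
  assumes "mproj p" "0 \<le> u" "0 \<le> v"
  shows "\<exists>c d. pdiag p u v = c *\<^sub>R (pdiag p u v ** pdiag p u v) + d *\<^sub>R mat 1"
proof (cases "u + v = 0")
  case True
  then have "u = 0" "v = 0"
    using assms(2,3) by linarith+
  then have "pdiag p u v = 0 *\<^sub>R (pdiag p u v ** pdiag p u v) + 0 *\<^sub>R mat 1"
    by (simp add: pdiag_def)
  then show ?thesis
    by blast
next
  case False
  have "(u * u + u * v) / (u + v) = u" "(v * v + u * v) / (u + v) = v"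
    using False by (simp_all add: field_simps)
  then have "pdiag p u v = pdiag p ((u * u + u * v) / (u + v)) ((v * v + u * v) / (u + v))"
    by simp
  also have "\<dots> = (1 / (u + v)) *\<^sub>R (pdiag p u v ** pdiag p u v) + (u * v / (u + v)) *\<^sub>R mat 1"
    by (simp add: pdiag_mmult[OF assms(1)] scaleR_pdiag pdiag_add add_divide_distrib
        flip: pdiag_const[of p])
  finally show ?thesis
    by blast
qed

lemma mabs_pdiag:
  assumes "rank_one_proj p"
  shows "mabs (pdiag p s t) = pdiag p \<bar>s\<bar> \<bar>t\<bar>"
  unfolding mabs_def
proof (rule the_equality)
  have "mproj p"
    using assms by (simp add: rank_one_proj_def)
  have square: "madj (pdiag p s t) ** pdiag p s t = pdiag p (s * s) (t * t)"
    by (simp add: madj_pdiag[OF \<open>mproj p\<close>] pdiag_mmult[OF \<open>mproj p\<close>])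
  then show "mpos (pdiag p \<bar>s\<bar> \<bar>t\<bar>) \<and>
      pdiag p \<bar>s\<bar> \<bar>t\<bar> ** pdiag p \<bar>s\<bar> \<bar>t\<bar> = madj (pdiag p s t) ** pdiag p s t"
    by (simp add: mpos_pdiag_iff[OF assms] pdiag_mmult[OF \<open>mproj p\<close>])
  fix r
  assume "mpos r \<and> r ** r = madj (pdiag p s t) ** pdiag p s t"
  then have r: "mpos r" "r ** r = pdiag p (s * s) (t * t)"
    using square by simp_all
  then have "madj r = r"
    by (simp add: mpos_def)
  then obtain p' u v where p': "rank_one_proj p'" and "r = pdiag p' u v"
    using hermitian_eq_pdiag by blast
  moreover have "0 \<le> u" "0 \<le> v"
    using r(1) mpos_pdiag_iff[OF p'] \<open>r = pdiag p' u v\<close> by simp_all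
  moreover have "mproj p'"
    using p' by (simp add: rank_one_proj_def)
  ultimately obtain c d where "r = c *\<^sub>R (r ** r) + d *\<^sub>R mat 1"
    using pdiag_affine_of_square by blast
  then have r_pdiag: "r = pdiag p (c * (s * s) + d) (c * (t * t) + d)"
    by (simp add: r(2) scaleR_pdiag pdiag_add flip: pdiag_const[of p])
  then have "0 \<le> c * (s * s) + d" "0 \<le> c * (t * t) + d"
    using r(1) by (simp_all add: mpos_pdiag_iff[OF assms])
  moreover have "(c * (s * s) + d) * (c * (s * s) + d) = s * s"
    "(c * (t * t) + d) * (c * (t * t) + d) = t * t"
    using r(2) by (simp_all add: r_pdiag pdiag_mmult[OF \<open>mproj p\<close>] pdiag_eq_iff[OF assms])
  ultimately have "c * (s * s) + d = \<bar>s\<bar>" "c * (t * t) + d = \<bar>t\<bar>"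
    using real_sqrt_abs2[of s] real_sqrt_abs2[of t] real_sqrt_abs2[of "c * (s * s) + d"]
      real_sqrt_abs2[of "c * (t * t) + d"] by simp_all
  then show "r = pdiag p \<bar>s\<bar> \<bar>t\<bar>"
    using r_pdiag by simp
qed

lemma pdiag_eq_0_iff:
  assumes "rank_one_proj p"
  shows "pdiag p s t = 0 \<longleftrightarrow> s = 0 \<and> t = 0"
  using pdiag_eq_iff[OF assms, of s t 0 0] by (simp add: pdiag_def)

lemma pdiag_eq_mat1_iff:
  assumes "rank_one_proj p"
  shows "pdiag p s t = mat 1 \<longleftrightarrow> s = 1 \<and> t = 1"
  using pdiag_eq_iff[OF assms, of s t 1 1] by (simp add: pdiag_const)

lemma mle_0_pdiag_iff:
  assumes "rank_one_proj p"
  shows "mle 0 (pdiag p s t) \<longleftrightarrow> 0 \<le> s \<and> 0 \<le> t"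
  by (simp add: mle_def mpos_pdiag_iff[OF assms])

lemma mle_pdiag_mat1_iff:
  assumes "rank_one_proj p"
  shows "mle (pdiag p s t) (mat 1) \<longleftrightarrow> s \<le> 1 \<and> t \<le> 1"
  by (simp add: mle_def mat1_diff_pdiag mpos_pdiag_iff[OF assms])

lemma mproj_mle_rank_one_mmult:
  assumes "rank_one_proj p" "mproj q" "mle q p"
  shows "q ** p = q"
proof -
  define c where "c = mat 1 - p"
  have c: "rank_one_proj c" "madj c = c" "c ** p = 0"
    using rank_one_proj_compl[OF assms(1)] assms(1)
    by (simp_all add: c_def rank_one_proj_def mproj_def matrix_distrib)
  have q: "madj q = q" "q ** q = q"
    using assms(2) by (simp_all add: mproj_def)
  define \<tau> where "\<tau> = Re (trace (c ** q))"
  have cqc: "c ** q ** c = pdiag p 0 \<tau>"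
    using rank_one_sandwich[OF c(1) q(1)] by (simp add: \<tau>_def pdiag_def c_def)
  have "madj c ** (p - q) ** c = c ** p ** c - c ** q ** c"
    using c(2) by (simp only: matrix_diff_ldistrib matrix_diff_rdistrib)
  then have "madj c ** (p - q) ** c = pdiag p 0 (- \<tau>)"
    using c(3) cqc by (simp add: pdiag_def)
  moreover have "mpos (madj c ** (p - q) ** c)"
    using assms(3) by (simp add: mle_def mpos_sandwich)
  ultimately have "\<tau> \<le> 0"
    by (simp add: mpos_pdiag_iff[OF assms(1)])
  have qc: "madj (q ** c) ** (q ** c) = c ** q ** c"
    using c(2) q by (simp add: madj_mmult) (metis matrix_mul_assoc)
  then have "\<tau> \<ge> 0"
    using mpos_madj_mmult[of "q ** c"] by (simp add: cqc mpos_pdiag_iff[OF assms(1)])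
  with \<open>\<tau> \<le> 0\<close> have "madj (q ** c) ** (q ** c) = 0"
    by (simp add: qc cqc pdiag_def)
  then have "q ** c = 0"
    by (rule madj_mmult_self_eq_0)
  then show ?thesis
    by (simp add: c_def matrix_diff_ldistrib)
qed

lemma rank_one_proj_imp_minproj:
  assumes "rank_one_proj p"
  shows "minproj p"
proof -
  have "mproj p" "p \<noteq> 0"
    using assms by (simp_all add: rank_one_proj_def)
  moreover have "q = 0 \<or> q = p" if "mproj q" "mle q p" for q
  proof -
    have q: "madj q = q" "q ** q = q"
      using \<open>mproj q\<close> by (simp_all add: mproj_def)
    have "q ** p = q"
      using mproj_mle_rank_one_mmult[OF assms that] .
    moreover have "p ** q = q"
      using \<open>q ** p = q\<close> q(1) \<open>mproj p\<close> by (metis madj_mmult mproj_def)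
    ultimately have "q = Re (trace (p ** q)) *\<^sub>R p"
      using rank_one_sandwich[OF assms q(1)] by simp
    then obtain \<sigma> where \<sigma>: "q = \<sigma> *\<^sub>R p"
      by blast
    then have "(\<sigma> * \<sigma>) *\<^sub>R p = \<sigma> *\<^sub>R p"
      using q(2) \<open>mproj p\<close> by (simp add: mproj_def matrix_scalar_ac flip: scalar_matrix_assoc)
    then have "\<sigma> = 0 \<or> \<sigma> = 1"
      using \<open>p \<noteq> 0\<close> by (simp add: scaleR_cancel_right)
    then show ?thesis
      using \<sigma> by auto
  qed
  ultimately show ?thesis
    by (simp add: minproj_def)
qed

lemma sproj_pdiag:
  assumes "mproj p"
  shows "sproj (pdiag p s t) = pdiag p (of_bool (s = 1)) (of_bool (t = 1))"
  by (simp add: sproj_def mat1_diff_pdiag rproj_pdiag[OF assms])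

lemma nproj_pdiag:
  assumes "mproj p"
  shows "nproj (pdiag p s t) = pdiag p (of_bool (s = 0)) (of_bool (t = 0))"
  by (simp add: nproj_def mat1_diff_pdiag rproj_pdiag[OF assms])

lemma sproj_pdiag_eq_0_iff:
  assumes "rank_one_proj p"
  shows "sproj (pdiag p s t) = 0 \<longleftrightarrow> s \<noteq> 1 \<and> t \<noteq> 1"
  using assms by (simp add: sproj_pdiag rank_one_proj_def pdiag_eq_0_iff)

lemma nproj_pdiag_eq_0_iff:
  assumes "rank_one_proj p"
  shows "nproj (pdiag p s t) = 0 \<longleftrightarrow> s \<noteq> 0 \<and> t \<noteq> 0"
  using assms by (simp add: nproj_pdiag rank_one_proj_def pdiag_eq_0_iff)

lemma eproj_pdiag_eq_0_iff:
  assumes "rank_one_proj p"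
  shows "eproj (pdiag p s t) = 0 \<longleftrightarrow> s \<in> {0, 1} \<and> t \<in> {0, 1}"
proof -
  have "eproj (pdiag p s t) = pdiag p (s - of_bool (s = 1)) (t - of_bool (t = 1))"
    using assms by (simp add: eproj_def sproj_pdiag rank_one_proj_def pdiag_diff)
  then show ?thesis
    by (auto simp: pdiag_eq_0_iff[OF assms])
qed

lemma strict_pdiag_iff:
  assumes "rank_one_proj p" "s \<in> {0..1}" "t \<in> {0..1}"
  shows "strict (pdiag p s t) \<longleftrightarrow> s \<in> {0<..<1} \<and> t \<in> {0<..<1}"
  using assms
  by (auto simp: strict_def pdiag_eq_0_iff sproj_pdiag_eq_0_iff nproj_pdiag_eq_0_iff
      mle_0_pdiag_iff mle_pdiag_mat1_iff)

lemma abs_compatible_pdiag_iff: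
  assumes "rank_one_proj p"
  shows "abs_compatible (pdiag p \<alpha> \<beta>) (pdiag p \<gamma> \<delta>) \<longleftrightarrow>
    \<bar>\<alpha> - \<gamma>\<bar> + \<bar>1 - \<alpha> - \<gamma>\<bar> = 1 \<and> \<bar>\<beta> - \<delta>\<bar> + \<bar>1 - \<beta> - \<delta>\<bar> = 1"
proof -
  have "mat 1 - pdiag p \<alpha> \<beta> - pdiag p \<gamma> \<delta> = pdiag p (1 - \<alpha> - \<gamma>) (1 - \<beta> - \<delta>)"
    by (simp add: mat1_diff_pdiag pdiag_diff)
  then show ?thesis
    by (simp add: abs_compatible_def pdiag_diff mabs_pdiag[OF assms] pdiag_add
        pdiag_eq_mat1_iff[OF assms])
qed

lemma unit_interval_abs_compatible_iff:
  fixes x y :: real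
  assumes "x \<in> {0..1}" "y \<in> {0..1}"
  shows "\<bar>x - y\<bar> + \<bar>1 - x - y\<bar> = 1 \<longleftrightarrow> x \<in> {0, 1} \<or> y \<in> {0, 1}"
  using assms by (cases "x \<le> y"; cases "x + y \<le> 1") (auto simp: abs_if)

definition form_a :: "M2 \<Rightarrow> M2 \<Rightarrow> bool" where
  "form_a a b \<longleftrightarrow> (\<exists>\<alpha> \<beta> p. \<alpha> \<in> {0<..<1} \<and> \<beta> \<in> {0<..<1} \<and> minproj p \<and>
     b = p \<and> a = \<alpha> *\<^sub>R p + \<beta> *\<^sub>R (mat 1 - p))"

definition form_b1 :: "M2 \<Rightarrow> M2 \<Rightarrow> bool" where
  "form_b1 a b \<longleftrightarrow> (\<exists>\<alpha> \<beta> p. \<alpha> \<in> {0..1} \<and> \<beta> \<in> {0..1} \<and> \<alpha> + \<beta> > 0 \<and> minproj p \<and>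
     a = p \<and> b = \<alpha> *\<^sub>R p + \<beta> *\<^sub>R (mat 1 - p))"

definition form_b2 :: "M2 \<Rightarrow> M2 \<Rightarrow> bool" where
  "form_b2 a b \<longleftrightarrow> (\<exists>\<alpha> \<beta> p. \<alpha> \<in> {0..1} \<and> \<beta> \<in> {0..1} \<and> minproj p \<and>
     ((a = p + \<alpha> *\<^sub>R (mat 1 - p) \<and> b = \<beta> *\<^sub>R p + (mat 1 - p) \<and> \<alpha> \<noteq> 0)
      \<or> (a = p + \<alpha> *\<^sub>R (mat 1 - p) \<and> b = \<beta> *\<^sub>R p \<and> \<alpha> \<noteq> 0 \<and> \<beta> \<noteq> 0)))"

definition form_b3 :: "M2 \<Rightarrow> M2 \<Rightarrow> bool" where
  "form_b3 a b \<longleftrightarrow> (\<exists>\<alpha> \<beta> p. \<alpha> \<in> {0..1} \<and> \<beta> \<in> {0..1} \<and> minproj p \<and>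
     ((a = \<alpha> *\<^sub>R p \<and> b = p + \<beta> *\<^sub>R (mat 1 - p) \<and> \<alpha> \<noteq> 0)
      \<or> (a = \<alpha> *\<^sub>R p \<and> b = \<beta> *\<^sub>R (mat 1 - p) \<and> \<alpha> \<noteq> 0 \<and> \<beta> \<noteq> 0)))"

locale compatible_pdiag_pair =
  fixes p :: M2 and \<alpha> \<beta> \<gamma> \<delta> :: real
  assumes rank_one: "rank_one_proj p"
    and weights: "\<alpha> \<in> {0..1}" "\<beta> \<in> {0..1}" "\<gamma> \<in> {0..1}" "\<delta> \<in> {0..1}"
    and a_nontrivial: "(\<alpha>, \<beta>) \<notin> {(0, 0), (1, 1)}"
    and b_nontrivial: "(\<gamma>, \<delta>) \<notin> {(0, 0), (1, 1)}"
    and compatible: "\<alpha> \<in> {0, 1} \<or> \<gamma> \<in> {0, 1}" "\<beta> \<in> {0, 1} \<or> \<delta> \<in> {0, 1}"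
begin

text \<open>Exchanging \<open>p\<close> and \<open>1 - p\<close> swaps the weights, so each case below is proved for one
  orientation only.\<close>

lemma swapped: "compatible_pdiag_pair (mat 1 - p) \<beta> \<alpha> \<delta> \<gamma>"
  using rank_one_proj_compl[OF rank_one] weights a_nontrivial b_nontrivial compatible
  by unfold_locales auto

lemma minproj_p: "minproj p"
  using rank_one by (rule rank_one_proj_imp_minproj)

lemma form_a_oriented:
  assumes "\<alpha> \<in> {0<..<1}" "\<beta> \<in> {0<..<1}" "\<gamma> = 1"
  shows "form_a (pdiag p \<alpha> \<beta>) (pdiag p \<gamma> \<delta>)"
proof -
  have "\<delta> = 0"
    using assms compatible(2) b_nontrivial by auto
  then show ?thesis
    unfolding form_a_def using assms minproj_p
    by (intro exI[of _ \<alpha>] exI[of _ \<beta>] exI[of _ p]) (simp add: pdiag_def)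
qed

lemma form_a:
  assumes "\<alpha> \<in> {0<..<1}" "\<beta> \<in> {0<..<1}"
  shows "form_a (pdiag p \<alpha> \<beta>) (pdiag p \<gamma> \<delta>)"
proof (cases "\<gamma> = 1")
  case True
  then show ?thesis
    by (rule form_a_oriented[OF assms])
next
  case False
  then have "\<delta> = 1"
    using assms compatible b_nontrivial by auto
  then show ?thesis
    using compatible_pdiag_pair.form_a_oriented[OF swapped] assms by (simp add: pdiag_compl)
qed

lemma form_b1_oriented:
  assumes "\<alpha> = 1" "\<beta> = 0"
  shows "form_b1 (pdiag p \<alpha> \<beta>) (pdiag p \<gamma> \<delta>)"
proof -
  have "\<gamma> + \<delta> > 0"
    using weights b_nontrivial by auto
  then show ?thesis
    unfolding form_b1_def using assms weights minproj_p
    by (intro exI[of _ \<gamma>] exI[of _ \<delta>] exI[of _ p]) (simp add: pdiag_def)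
qed

lemma form_b1:
  assumes "\<alpha> \<in> {0, 1}" "\<beta> \<in> {0, 1}"
  shows "form_b1 (pdiag p \<alpha> \<beta>) (pdiag p \<gamma> \<delta>)"
proof (cases "\<alpha> = 1")
  case True
  then show ?thesis
    using assms a_nontrivial form_b1_oriented by auto
next
  case False
  then show ?thesis
    using assms a_nontrivial compatible_pdiag_pair.form_b1_oriented[OF swapped]
    by (auto simp: pdiag_compl)
qed

lemma form_b2_oriented:
  assumes "\<alpha> = 1" "\<beta> \<in> {0<..<1}"
  shows "form_b2 (pdiag p \<alpha> \<beta>) (pdiag p \<gamma> \<delta>)"
proof -
  have "\<delta> = 0 \<and> \<gamma> \<noteq> 0 \<or> \<delta> = 1"
    using assms compatible(2) b_nontrivial by auto
  then show ?thesis
    unfolding form_b2_def using assms weights minproj_p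
    by (intro exI[of _ \<beta>] exI[of _ \<gamma>] exI[of _ p]) (auto simp: pdiag_def)
qed

lemma form_b2:
  assumes "\<alpha> = 1 \<or> \<beta> = 1" "\<not> (\<alpha> \<in> {0, 1} \<and> \<beta> \<in> {0, 1})"
  shows "form_b2 (pdiag p \<alpha> \<beta>) (pdiag p \<gamma> \<delta>)"
proof (cases "\<alpha> = 1")
  case True
  then show ?thesis
    using assms weights form_b2_oriented by auto
next
  case False
  then show ?thesis
    using assms weights compatible_pdiag_pair.form_b2_oriented[OF swapped]
    by (auto simp: pdiag_compl)
qed

lemma form_b3_oriented:
  assumes "\<alpha> \<in> {0<..<1}" "\<beta> = 0"
  shows "form_b3 (pdiag p \<alpha> \<beta>) (pdiag p \<gamma> \<delta>)"
proof -
  have "\<gamma> = 0 \<and> \<delta> \<noteq> 0 \<or> \<gamma> = 1"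
    using assms compatible(1) b_nontrivial by auto
  then show ?thesis
    unfolding form_b3_def using assms weights minproj_p
    by (intro exI[of _ \<alpha>] exI[of _ \<delta>] exI[of _ p]) (auto simp: pdiag_def)
qed

lemma form_b3:
  assumes "\<alpha> = 0 \<or> \<beta> = 0" "\<not> (\<alpha> \<in> {0, 1} \<and> \<beta> \<in> {0, 1})"
  shows "form_b3 (pdiag p \<alpha> \<beta>) (pdiag p \<gamma> \<delta>)"
proof (cases "\<beta> = 0")
  case True
  then show ?thesis
    using assms weights form_b3_oriented by auto
next
  case False
  then show ?thesis
    using assms weights compatible_pdiag_pair.form_b3_oriented[OF swapped]
    by (auto simp: pdiag_compl)
qed

end

theorem proposition3p1:
  fixes a b :: M2
  assumes "mle 0 a" and "mle a (mat 1)" and "mle 0 b" and "mle b (mat 1)"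
    and "a \<notin> {0, mat 1}" and "b \<notin> {0, mat 1}"
    and "abs_compatible a b" and "a ** b = b ** a"
  shows "(strict a \<longrightarrow>
           (\<exists>\<alpha> \<beta> p. \<alpha> \<in> {0<..<1} \<and> \<beta> \<in> {0<..<1} \<and> minproj p \<and>
              b = p \<and> a = \<alpha> *\<^sub>R p + \<beta> *\<^sub>R (mat 1 - p)))
       \<and> (\<not> strict a \<longrightarrow>
           (eproj a = 0 \<longrightarrow>
              (\<exists>\<alpha> \<beta> p. \<alpha> \<in> {0..1} \<and> \<beta> \<in> {0..1} \<and> \<alpha> + \<beta> > 0 \<and> minproj p \<and>
                 a = p \<and> b = \<alpha> *\<^sub>R p + \<beta> *\<^sub>R (mat 1 - p)))
         \<and> (sproj a \<noteq> 0 \<and> eproj a \<noteq> 0 \<longrightarrow>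
              (\<exists>\<alpha> \<beta> p. \<alpha> \<in> {0..1} \<and> \<beta> \<in> {0..1} \<and> minproj p \<and>
                 ((a = p + \<alpha> *\<^sub>R (mat 1 - p) \<and> b = \<beta> *\<^sub>R p + (mat 1 - p) \<and> \<alpha> \<noteq> 0)
                  \<or> (a = p + \<alpha> *\<^sub>R (mat 1 - p) \<and> b = \<beta> *\<^sub>R p \<and> \<alpha> \<noteq> 0 \<and> \<beta> \<noteq> 0))))
         \<and> (nproj a \<noteq> 0 \<and> eproj a \<noteq> 0 \<longrightarrow>
              (\<exists>\<alpha> \<beta> p. \<alpha> \<in> {0..1} \<and> \<beta> \<in> {0..1} \<and> minproj p \<and>
                 ((a = \<alpha> *\<^sub>R p \<and> b = p + \<beta> *\<^sub>R (mat 1 - p) \<and> \<alpha> \<noteq> 0)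
                  \<or> (a = \<alpha> *\<^sub>R p \<and> b = \<beta> *\<^sub>R (mat 1 - p) \<and> \<alpha> \<noteq> 0 \<and> \<beta> \<noteq> 0)))))"
proof -
  have "madj a = a" "madj b = b"
    using assms(1,3) by (simp_all add: mle_def mpos_def)
  then obtain p \<alpha> \<beta> \<gamma> \<delta> where p: "rank_one_proj p" and a: "a = pdiag p \<alpha> \<beta>" and b: "b = pdiag p \<gamma> \<delta>"
    using commuting_hermitian_simultaneous_pdiag assms(8) by blast
  have weights: "\<alpha> \<in> {0..1}" "\<beta> \<in> {0..1}" "\<gamma> \<in> {0..1}" "\<delta> \<in> {0..1}"
    using assms(1-4) by (simp_all add: a b mle_0_pdiag_iff[OF p] mle_pdiag_mat1_iff[OF p])
  interpret compatible_pdiag_pair p \<alpha> \<beta> \<gamma> \<delta>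
  proof
    show "(\<alpha>, \<beta>) \<notin> {(0, 0), (1, 1)}" "(\<gamma>, \<delta>) \<notin> {(0, 0), (1, 1)}"
      using assms(5,6) by (auto simp: a b pdiag_eq_0_iff[OF p] pdiag_eq_mat1_iff[OF p])
    show "\<alpha> \<in> {0, 1} \<or> \<gamma> \<in> {0, 1}" "\<beta> \<in> {0, 1} \<or> \<delta> \<in> {0, 1}"
      using assms(7) weights
      by (simp_all add: a b abs_compatible_pdiag_iff[OF p] unit_interval_abs_compatible_iff)
  qed (use p weights in auto)
  have "strict a \<longleftrightarrow> \<alpha> \<in> {0<..<1} \<and> \<beta> \<in> {0<..<1}"
    and "eproj a = 0 \<longleftrightarrow> \<alpha> \<in> {0, 1} \<and> \<beta> \<in> {0, 1}"
    and "sproj a \<noteq> 0 \<longleftrightarrow> \<alpha> = 1 \<or> \<beta> = 1"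
    and "nproj a \<noteq> 0 \<longleftrightarrow> \<alpha> = 0 \<or> \<beta> = 0"
    using weights
    by (simp_all add: a strict_pdiag_iff[OF p] eproj_pdiag_eq_0_iff[OF p]
        sproj_pdiag_eq_0_iff[OF p] nproj_pdiag_eq_0_iff[OF p])
  then show ?thesis
    using form_a form_b1 form_b2 form_b3
    unfolding a b form_a_def form_b1_def form_b2_def form_b3_def by blast
qed

end
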